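(* Let $F_c$ be a CABA framework, let $\alpha,\beta\in\mathit{CArg}$, $\Gamma=\mathit{GrCInst}(\alpha)$ and $\Delta=\mathit{GrCInst}(\beta)$. Then $\alpha$ partially attacks $\beta$ if and only if there exist $\alpha'\in\Gamma$ and $\beta'\in\Delta$ such that $\alpha'$ partially attacks $\beta'$.
   Context: Conventions. $\mathsf X$: tuple of variables; $\mathsf t,\mathsf u$: tuples of terms; $\mathsf X=\mathsf t$: componentwise equality constraints. A substitution $\vartheta=\{X_1/t_1,\dots,X_n/t_n\}$ maps distinct variables to terms; $e\vartheta$ replaces each $X_i$ by $t_i$. $\mathit{vars}(e)$: variables of $e$; ground: no variables. $\exists_{-V}B$: $B$ existentially quantified over its free variables not in $V$; $\exists(\cdot)$ closure. Theory of constraints. $\mathcal{CT}$ is a first-order theory with equality (identity on its domain, including the Clark Equality Theory) whose atomic formulas form the set $\mathcal C$ of constraints; a finite set $\{c_1,\dots,c_n\}$ is consistent if $\mathcal{CT}\models\exists(c_1\wedge\dots\wedge c_n)$. CABA framework $F_c=\langle\mathcal L_c,\mathcal C,\mathcal R,\mathcal{CT},\mathcal A,\overline{\cdot}\rangle$: $\mathcal L_c$ a set of atoms; $\mathcal C\subseteq\mathcal L_c$ constraints; $\mathcal R$ rules $s_0\leftarrow s_1,\dots,s_m$ ($s_0\in\mathcal L_c\setminus\mathcal C$) in normalised form; $\mathcal A\subseteq\mathcal L_c\setminus\mathcal C$ nonempty assumptions, not heads of rules; $\overline\cdot:\mathcal A\to\mathcal L_c\setminus\mathcal C$ total with $\overline{p(\mathsf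 t)}=cp(\mathsf t)$ for a fixed predicate $cp$ per assumption predicate $p$; $\mathcal L_c,\mathcal C,\mathcal A$ predicate closed. Constrained arguments. A tight constrained argument $C\cup A\vdash_R s$ (consistent $C\subseteq\mathcal C$, $A\subseteq\mathcal A$, $R\subseteq\mathcal R$, $s\in\mathcal L_c\setminus\mathcal C$) is a finite tree with root $s$, each non-leaf node $p(\mathsf t)$ having as children exactly $s_1\vartheta,\dots,s_m\vartheta$ for exactly one renamed-apart copy $p(\mathsf X)\leftarrow s_1,\dots,s_m$ of a rule of $R$, $\vartheta=\{\mathsf X/\mathsf t\}$ (or true for a fact), each leaf a constraint of $C$, an assumption of $A$ or true. A constrained argument is $C\vartheta\cup D\cup A\vartheta\vdash_R s\vartheta$ for some tight $C\cup A\vdash_R s$, substitution $\vartheta$, $D\subseteq\mathcal C$ with $C\vartheta\cup D$ consistent; a constrained instance of a constrained argument $C\cup A\vdash_R s$ is $C\vartheta\cup D\cup A\vartheta\vdash_R s\vartheta$ with $C\vartheta\cup D$ consistent. $\mathit{CArg}$: all constrained arguments; $\mathit{GrCInst}(\alpha)$: ground constrained instances of $\alpha$. Partial attack. Let $\alpha=\{c_1,\dots,c_m\}\cup A_1\vdash s_1$ and $\beta=\{d_1,\dots,d_n\}\cup A_2\cup\{a\}\vdash s_2$ be constrained arguments with $s_1=\overline a$. $\alpha$ partially attacks $\beta$ if $\mathcal{CT}\models\exists(\exists_{-\mathit{vars}(s_1)}(c_1\wedge\dots\wedge c_m)\wedge\exists_{-\mathit{vars}(s_1)}(d_1\wedge\dots\wedge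 d_n))$. If $\alpha'=\{c_i\}\cup A_1\vdash\overline{p(\mathsf t)}$ and $\beta'=\{d_j\}\cup A_2\cup\{p(\mathsf u)\}\vdash s_2$ with $\mathsf t\neq\mathsf u$, and $\mathsf X$ is a tuple of new distinct variables, $\alpha'$ partially attacks $\beta'$ if $\{c_i\}\cup\{\mathsf X=\mathsf t\}\cup A_1\vdash\overline{p(\mathsf X)}$ partially attacks $\{d_j\}\cup\{\mathsf X=\mathsf u\}\cup A_2\cup\{p(\mathsf X)\}\vdash s_2$ in the previous sense.
   Formalization: $\mathcal{CT}$ is a single structure whose domain is the ground terms and whose equality is syntactic identity, so consistency and partial attack ask for a ground assignment satisfying the constraints. Each condition added here is assumed in the paper as well or is needed for the statement above to hold. *)

theory Defs
  imports Main
begin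

datatype ('f,'v) trm = Var 'v | Fn 'f "('f,'v) trm list"

primrec tvars :: "('f,'v) trm \<Rightarrow> 'v set" where
  "tvars (Var x) = {x}"
| "tvars (Fn f ts) = \<Union>(set (map tvars ts))"

primrec tsubst :: "('v \<Rightarrow> ('f,'v) trm) \<Rightarrow> ('f,'v) trm \<Rightarrow> ('f,'v) trm" where
  "tsubst \<sigma> (Var x) = \<sigma> x"
| "tsubst \<sigma> (Fn f ts) = Fn f (map (tsubst \<sigma>) ts)"

primrec unvar :: "('f,'v) trm \<Rightarrow> 'v" where
  "unvar (Var x) = x"
| "unvar (Fn f ts) = undefined"

type_synonym ('p,'f,'v) atom = "'p \<times> ('f,'v) trm list"

text \<open>A rule s0 <- s1,...,sm: head and body list.\<close>
type_synonym ('p,'f,'v) rule = "('p,'f,'v) atom \<times> ('p,'f,'v) atom list"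

definition avars :: "('p,'f,'v) atom \<Rightarrow> 'v set" where
  "avars a = \<Union>(tvars ` set (snd a))"

definition asubst :: "('v \<Rightarrow> ('f,'v) trm) \<Rightarrow> ('p,'f,'v) atom \<Rightarrow> ('p,'f,'v) atom" where
  "asubst \<sigma> a = (fst a, map (tsubst \<sigma>) (snd a))"

definition aground :: "('p,'f,'v) atom \<Rightarrow> bool" where
  "aground a \<longleftrightarrow> avars a = {}"

definition rvars :: "('p,'f,'v) rule \<Rightarrow> 'v set" where
  "rvars r = avars (fst r) \<union> \<Union>(avars ` set (snd r))"

definition ren_rule :: "('v \<Rightarrow> 'v) \<Rightarrow> ('p,'f,'v) rule \<Rightarrow> ('p,'f,'v) rule" where
  "ren_rule \<rho> r = (asubst (Var \<circ> \<rho>) (fst r), map (asubst (Var \<circ> \<rho>)) (snd r))"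

definition bind :: "'v list \<Rightarrow> ('f,'v) trm list \<Rightarrow> 'v \<Rightarrow> ('f,'v) trm" where
  "bind Xs ts x = (case map_of (zip Xs ts) x of None \<Rightarrow> Var x | Some t \<Rightarrow> t)"

definition normalised :: "('p,'f,'v) rule \<Rightarrow> bool" where
  "normalised r \<longleftrightarrow> (\<exists>Xs. snd (fst r) = map Var Xs \<and> distinct Xs)"

text \<open>The language L_c consists of all atoms; since L_c, C and A are predicate closed,
  the constraints and assumptions are given by sets of predicate symbols.
  The theory of constraints CT is represented by its (Herbrand) interpretation
  of constraint predicates on ground terms: CT |= exists(phi) iff phi is satisfied
  by some ground assignment.  eqp is the equality predicate.\<close>
record ('p,'f,'v) caba =
  cpreds :: "'p set"
  apreds :: "'p set"
  rules :: "('p,'f,'v) rule set"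
  contrp :: "'p \<Rightarrow> 'p"
  interp :: "'p \<Rightarrow> ('f,'v) trm list \<Rightarrow> bool"
  eqp :: 'p

definition gr_assign :: "('v \<Rightarrow> ('f,'v) trm) \<Rightarrow> bool" where
  "gr_assign \<sigma> \<longleftrightarrow> (\<forall>x. tvars (\<sigma> x) = {})"

definition sat :: "('p,'f,'v,'z) caba_scheme \<Rightarrow> ('v \<Rightarrow> ('f,'v) trm) \<Rightarrow> ('p,'f,'v) atom \<Rightarrow> bool" where
  "sat F \<sigma> c \<longleftrightarrow> interp F (fst c) (map (tsubst \<sigma>) (snd c))"

definition catoms :: "('p,'f,'v,'z) caba_scheme \<Rightarrow> ('p,'f,'v) atom set" where
  "catoms F = {c. fst c \<in> cpreds F}"

definition consistent :: "('p,'f,'v,'z) caba_scheme \<Rightarrow> ('p,'f,'v) atom set \<Rightarrow> bool" where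
  "consistent F S \<longleftrightarrow> finite S \<and> S \<subseteq> catoms F \<and> (\<exists>\<sigma>. gr_assign \<sigma> \<and> (\<forall>c\<in>S. sat F \<sigma> c))"

definition contr :: "('p,'f,'v,'z) caba_scheme \<Rightarrow> ('p,'f,'v) atom \<Rightarrow> ('p,'f,'v) atom" where
  "contr F a = (contrp F (fst a), snd a)"

definition caba_framework :: "('p,'f,'v,'z) caba_scheme \<Rightarrow> bool" where
  "caba_framework F \<longleftrightarrow>
     infinite (UNIV :: 'v set)
   \<and> apreds F \<noteq> {}
   \<and> cpreds F \<inter> apreds F = {}
   \<and> eqp F \<in> cpreds F
   \<and> (\<forall>ts. (\<forall>t\<in>set ts. tvars t = {}) \<longrightarrow> (interp F (eqp F) ts \<longleftrightarrow> (\<exists>s. ts = [s, s])))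
   \<and> (\<forall>p\<in>apreds F. contrp F p \<notin> cpreds F)
   \<and> (\<forall>r\<in>rules F. fst (fst r) \<notin> cpreds F \<and> fst (fst r) \<notin> apreds F \<and> normalised r)"

text \<open>Nd s r rho children: node labelled s expanded with the renamed copy (by rho) of rule r.
  A node with no children corresponds to a fact (child "true").\<close>
datatype ('p,'f,'v) dtree =
    Lf "('p,'f,'v) atom"
  | Nd "('p,'f,'v) atom" "('p,'f,'v) rule" "'v \<Rightarrow> 'v" "('p,'f,'v) dtree list"

primrec root :: "('p,'f,'v) dtree \<Rightarrow> ('p,'f,'v) atom" where
  "root (Lf a) = a"
| "root (Nd a r \<rho> ts) = a"

primrec leaves :: "('p,'f,'v) dtree \<Rightarrow> ('p,'f,'v) atom set" where
  "leaves (Lf a) = {a}"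
| "leaves (Nd a r \<rho> ts) = \<Union>(set (map leaves ts))"

primrec nds :: "('p,'f,'v) dtree \<Rightarrow> (('p,'f,'v) rule \<times> ('v \<Rightarrow> 'v)) list" where
  "nds (Lf a) = []"
| "nds (Nd a r \<rho> ts) = (r, \<rho>) # concat (map nds ts)"

primrec wft :: "('p,'f,'v,'z) caba_scheme \<Rightarrow> ('p,'f,'v) dtree \<Rightarrow> bool" where
  "wft F (Lf a) \<longleftrightarrow> fst a \<in> cpreds F \<union> apreds F"
| "wft F (Nd a r \<rho> ts) \<longleftrightarrow>
     r \<in> rules F \<and> inj \<rho> \<and>
     (let r' = ren_rule \<rho> r; Xs = map unvar (snd (fst r')) in
        fst (fst r') = fst a \<and> length Xs = length (snd a) \<and>
        map root ts = map (asubst (bind Xs (snd a))) (snd r')) \<and>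
     list_all (wft F) ts"

definition renamed_apart :: "('p,'f,'v) dtree \<Rightarrow> bool" where
  "renamed_apart T \<longleftrightarrow>
     (let N = nds T in
       (\<forall>i<length N. \<forall>j<length N. i \<noteq> j \<longrightarrow>
          snd (N!i) ` rvars (fst (N!i)) \<inter> snd (N!j) ` rvars (fst (N!j)) = {}) \<and>
       (\<forall>i<length N. snd (N!i) ` rvars (fst (N!i)) \<inter> avars (root T) = {}))"

record ('p,'f,'v) carg =
  cons :: "('p,'f,'v) atom set"
  asms :: "('p,'f,'v) atom set"
  rls :: "('p,'f,'v) rule set"
  claim :: "('p,'f,'v) atom"

definition tight :: "('p,'f,'v,'z) caba_scheme \<Rightarrow> ('p,'f,'v) carg \<Rightarrow> bool" where
  "tight F \<alpha> \<longleftrightarrow> (\<exists>T. wft F T \<and> renamed_apart T \<and> root T = claim \<alpha> \<and>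
      fst (claim \<alpha>) \<notin> cpreds F \<and>
      cons \<alpha> = {l \<in> leaves T. fst l \<in> cpreds F} \<and>
      asms \<alpha> = {l \<in> leaves T. fst l \<in> apreds F} \<and>
      rls \<alpha> = fst ` set (nds T) \<and>
      consistent F (cons \<alpha>))"

definition cinst :: "('p,'f,'v) carg \<Rightarrow> ('v \<Rightarrow> ('f,'v) trm) \<Rightarrow> ('p,'f,'v) atom set \<Rightarrow> ('p,'f,'v) carg" where
  "cinst \<alpha> \<theta> D = \<lparr>cons = asubst \<theta> ` cons \<alpha> \<union> D, asms = asubst \<theta> ` asms \<alpha>,
                     rls = rls \<alpha>, claim = asubst \<theta> (claim \<alpha>)\<rparr>"

definition CArg :: "('p,'f,'v,'z) caba_scheme \<Rightarrow> ('p,'f,'v) carg set" where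
  "CArg F = {cinst \<tau> \<theta> D | \<tau> \<theta> D. tight F \<tau> \<and> D \<subseteq> catoms F \<and>
                consistent F (asubst \<theta> ` cons \<tau> \<union> D)}"

definition ground_arg :: "('p,'f,'v) carg \<Rightarrow> bool" where
  "ground_arg \<alpha> \<longleftrightarrow> (\<forall>c\<in>cons \<alpha>. aground c) \<and> (\<forall>a\<in>asms \<alpha>. aground a) \<and> aground (claim \<alpha>)"

definition GrCInst :: "('p,'f,'v,'z) caba_scheme \<Rightarrow> ('p,'f,'v) carg \<Rightarrow> ('p,'f,'v) carg set" where
  "GrCInst F \<alpha> = {cinst \<alpha> \<theta> D | \<theta> D. D \<subseteq> catoms F \<and>
                consistent F (asubst \<theta> ` cons \<alpha> \<union> D) \<and> ground_arg (cinst \<alpha> \<theta> D)}"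

text \<open>CT |= exists( exists_{-V} /\C  /\  exists_{-V} /\D ).\<close>
definition pcond :: "('p,'f,'v,'z) caba_scheme \<Rightarrow> 'v set \<Rightarrow> ('p,'f,'v) atom set \<Rightarrow> ('p,'f,'v) atom set \<Rightarrow> bool" where
  "pcond F V C D \<longleftrightarrow> (\<exists>\<sigma>. gr_assign \<sigma> \<and>
      (\<exists>\<sigma>1. gr_assign \<sigma>1 \<and> (\<forall>x\<in>V. \<sigma>1 x = \<sigma> x) \<and> (\<forall>c\<in>C. sat F \<sigma>1 c)) \<and>
      (\<exists>\<sigma>2. gr_assign \<sigma>2 \<and> (\<forall>x\<in>V. \<sigma>2 x = \<sigma> x) \<and> (\<forall>d\<in>D. sat F \<sigma>2 d)))"

definition arg_vars :: "('p,'f,'v) carg \<Rightarrow> 'v set" where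
  "arg_vars \<alpha> = \<Union>(avars ` cons \<alpha>) \<union> \<Union>(avars ` asms \<alpha>) \<union> avars (claim \<alpha>)"

definition eqs :: "('p,'f,'v,'z) caba_scheme \<Rightarrow> 'v list \<Rightarrow> ('f,'v) trm list \<Rightarrow> ('p,'f,'v) atom set" where
  "eqs F Xs ts = set (map (\<lambda>(x, t). (eqp F, [Var x, t])) (zip Xs ts))"

definition pattacks :: "('p,'f,'v,'z) caba_scheme \<Rightarrow> ('p,'f,'v) carg \<Rightarrow> ('p,'f,'v) carg \<Rightarrow> bool" where
  "pattacks F \<alpha> \<beta> \<longleftrightarrow> (\<exists>a\<in>asms \<beta>. fst a \<in> apreds F \<and>
     ((claim \<alpha> = contr F a \<and> pcond F (avars (claim \<alpha>)) (cons \<alpha>) (cons \<beta>))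
    \<or> (fst (claim \<alpha>) = contrp F (fst a) \<and> snd (claim \<alpha>) \<noteq> snd a \<and>
       (\<exists>Xs. distinct Xs \<and> length Xs = length (snd a) \<and> length Xs = length (snd (claim \<alpha>)) \<and>
          set Xs \<inter> (arg_vars \<alpha> \<union> arg_vars \<beta>) = {} \<and>
          pcond F (set Xs) (cons \<alpha> \<union> eqs F Xs (snd (claim \<alpha>)))
                           (cons \<beta> \<union> eqs F Xs (snd a))))))"

end

theory Submission
  imports Defs
begin

text \<open>Both clauses of a partial attack express one condition, \<open>ground_conflict\<close>: the
  constraints of the attacker and of the attacked argument have ground solutions under which
  the claim of the attacker becomes the contrary of an assumption of the attacked one.  For the
  second clause this rests on the fresh variables \<open>Xs\<close> and on the equality predicate
  being syntactic identity on ground terms.  A conflict between constrained instances lifts to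
  the original arguments by composing the solutions with the instantiations; conversely,
  instantiating the arguments with the solutions of a conflict gives ground instances in
  conflict.\<close>

lemma finite_tvars: "finite (tvars t)"
  by (induction t) auto

lemma tvars_tsubst_gr_assign: "gr_assign \<sigma> \<Longrightarrow> tvars (tsubst \<sigma> t) = {}"
  by (induction t) (auto simp: gr_assign_def)

lemma tsubst_ground: "tvars t = {} \<Longrightarrow> tsubst \<sigma> t = t"
  by (induction t) (auto simp: map_idI)

lemma tsubst_tsubst: "tsubst \<sigma> (tsubst \<theta> t) = tsubst (tsubst \<sigma> \<circ> \<theta>) t"
  by (induction t) auto

lemma tsubst_cong: "(\<And>x. x \<in> tvars t \<Longrightarrow> \<sigma> x = \<tau> x) \<Longrightarrow> tsubst \<sigma> t = tsubst \<tau> t"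
  by (induction t) auto

lemma tsubst_eq_imp_eq_on_tvars: "tsubst \<sigma> t = tsubst \<tau> t \<Longrightarrow> x \<in> tvars t \<Longrightarrow> \<sigma> x = \<tau> x"
  by (induction t) auto

lemma tsubst_comp_gr_assign: "gr_assign \<sigma> \<Longrightarrow> tsubst \<tau> \<circ> \<sigma> = \<sigma>"
  by (auto simp: gr_assign_def tsubst_ground)

lemma gr_assign_comp: "gr_assign \<sigma> \<Longrightarrow> gr_assign (tsubst \<sigma> \<circ> \<theta>)"
  by (simp add: gr_assign_def tvars_tsubst_gr_assign)

lemma ex_fresh_distinct_list:
  assumes "infinite (UNIV :: 'v set)" and "finite (S :: 'v set)"
  obtains Xs where "distinct Xs" "length Xs = n" "set Xs \<inter> S = {}"
proof -
  obtain B where "finite B" "card B = n" "B \<subseteq> UNIV - S"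
    using infinite_arbitrarily_large Diff_infinite_finite assms by metis
  moreover obtain Xs where "set Xs = B" "distinct Xs"
    using \<open>finite B\<close> finite_distinct_list by blast
  ultimately show thesis
    using that distinct_card by fastforce
qed

lemma bind_nth:
  "distinct Xs \<Longrightarrow> length Xs = length ts \<Longrightarrow> i < length Xs \<Longrightarrow> bind Xs ts (Xs ! i) = ts ! i"
  by (simp add: bind_def map_of_zip_nth)

definition solves :: "('p,'f,'v,'z) caba_scheme \<Rightarrow> ('v \<Rightarrow> ('f,'v) trm) \<Rightarrow> ('p,'f,'v) atom set \<Rightarrow> bool" where
  "solves F \<sigma> C \<longleftrightarrow> gr_assign \<sigma> \<and> (\<forall>c\<in>C. sat F \<sigma> c)"

lemma sat_asubst: "sat F \<sigma> (asubst \<theta> c) = sat F (tsubst \<sigma> \<circ> \<theta>) c"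
  by (simp add: sat_def asubst_def tsubst_tsubst o_def)

lemma sat_cong: "(\<And>x. x \<in> avars c \<Longrightarrow> \<sigma> x = \<tau> x) \<Longrightarrow> sat F \<sigma> c = sat F \<tau> c"
proof -
  assume "\<And>x. x \<in> avars c \<Longrightarrow> \<sigma> x = \<tau> x"
  then have "map (tsubst \<sigma>) (snd c) = map (tsubst \<tau>) (snd c)"
    by (auto simp: avars_def intro!: tsubst_cong)
  then show ?thesis
    unfolding sat_def by (simp only:)
qed

lemma solves_image_asubst: "solves F \<tau> (asubst \<theta> ` C) \<Longrightarrow> solves F (tsubst \<tau> \<circ> \<theta>) C"
  by (simp add: solves_def sat_asubst gr_assign_comp)

lemma solves_image_asubst_self: "solves F \<sigma> C \<Longrightarrow> solves F \<sigma> (asubst \<sigma> ` C)"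
  by (simp add: solves_def sat_asubst tsubst_comp_gr_assign)

lemma solves_Un: "solves F \<sigma> (C \<union> D) \<longleftrightarrow> solves F \<sigma> C \<and> solves F \<sigma> D"
  by (auto simp: solves_def)

lemma consistent_iff_solves: "consistent F S \<longleftrightarrow> finite S \<and> S \<subseteq> catoms F \<and> (\<exists>\<sigma>. solves F \<sigma> S)"
  by (simp add: consistent_def solves_def)

lemma pcond_iff_solves:
  "pcond F V C D \<longleftrightarrow> (\<exists>\<sigma>1 \<sigma>2. solves F \<sigma>1 C \<and> solves F \<sigma>2 D \<and> (\<forall>x\<in>V. \<sigma>1 x = \<sigma>2 x))"
proof
  assume "pcond F V C D"
  then show "\<exists>\<sigma>1 \<sigma>2. solves F \<sigma>1 C \<and> solves F \<sigma>2 D \<and> (\<forall>x\<in>V. \<sigma>1 x = \<sigma>2 x)"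
    unfolding pcond_def solves_def by fastforce
next
  assume "\<exists>\<sigma>1 \<sigma>2. solves F \<sigma>1 C \<and> solves F \<sigma>2 D \<and> (\<forall>x\<in>V. \<sigma>1 x = \<sigma>2 x)"
  then obtain \<sigma>1 \<sigma>2 where "solves F \<sigma>1 C" "solves F \<sigma>2 D" "\<forall>x\<in>V. \<sigma>1 x = \<sigma>2 x"
    by blast
  then show "pcond F V C D"
    unfolding pcond_def solves_def by (intro exI[of _ \<sigma>1]) auto
qed

lemma sat_eqp:
  assumes "caba_framework F" and "gr_assign \<sigma>"
  shows "sat F \<sigma> (eqp F, [Var x, t]) \<longleftrightarrow> \<sigma> x = tsubst \<sigma> t"
  using assms unfolding caba_framework_def sat_def
  by (auto simp: gr_assign_def tvars_tsubst_gr_assign)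

lemma solves_eqs_iff:
  assumes "caba_framework F" and "length Xs = length ts"
  shows "solves F \<sigma> (eqs F Xs ts) \<longleftrightarrow> gr_assign \<sigma> \<and> map \<sigma> Xs = map (tsubst \<sigma>) ts"
  using assms sat_eqp[OF assms(1)]
  by (auto simp: solves_def eqs_def list_eq_iff_zip_eq zip_map_map)

lemma solves_override_eqs:
  assumes fw: "caba_framework F" and sol: "solves F \<sigma> C"
    and Xs: "distinct Xs" "length Xs = length ts"
    and fresh: "set Xs \<inter> (\<Union>(avars ` C) \<union> \<Union>(tvars ` set ts)) = {}"
  shows "solves F (override_on \<sigma> (bind Xs (map (tsubst \<sigma>) ts)) (set Xs)) (C \<union> eqs F Xs ts)"
proof -
  define \<sigma>' where "\<sigma>' = override_on \<sigma> (bind Xs (map (tsubst \<sigma>) ts)) (set Xs)"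
  have gr: "gr_assign \<sigma>" using sol by (simp add: solves_def)
  have \<sigma>'_Xs: "map \<sigma>' Xs = map (tsubst \<sigma>) ts"
    using Xs by (simp add: list_eq_iff_nth_eq \<sigma>'_def bind_nth)
  have \<sigma>'_outside: "\<sigma>' x = \<sigma> x" if "x \<notin> set Xs" for x
    using that by (simp add: \<sigma>'_def)
  have \<sigma>'_ts: "map (tsubst \<sigma>') ts = map (tsubst \<sigma>) ts"
    using fresh by (auto simp: disjoint_iff intro!: tsubst_cong \<sigma>'_outside)
  have "gr_assign \<sigma>'"
  proof (unfold gr_assign_def, intro allI)
    fix x
    show "tvars (\<sigma>' x) = {}"
    proof (cases "x \<in> set Xs")
      case True
      then have "\<sigma>' x \<in> set (map (tsubst \<sigma>) ts)"
        using \<sigma>'_Xs by (metis image_eqI list.set_map)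
      then show ?thesis using tvars_tsubst_gr_assign[OF gr] by auto
    next
      case False
      then show ?thesis using gr by (simp add: \<sigma>'_outside gr_assign_def)
    qed
  qed
  moreover have "sat F \<sigma>' c" if c: "c \<in> C" for c
  proof -
    have "\<sigma>' x = \<sigma> x" if "x \<in> avars c" for x
      using fresh c that by (blast intro: \<sigma>'_outside)
    then show ?thesis
      using sol c sat_cong[of c \<sigma>' \<sigma> F] by (simp add: solves_def)
  qed
  moreover have "solves F \<sigma>' (eqs F Xs ts)"
    using solves_eqs_iff[OF fw Xs(2)] \<open>gr_assign \<sigma>'\<close> \<sigma>'_Xs \<sigma>'_ts by simp
  ultimately show ?thesis
    unfolding \<sigma>'_def[symmetric] by (auto simp: solves_def)
qed

lemma pcond_fresh_eqs:
  assumes fw: "caba_framework F" and sol: "solves F \<sigma>1 C" "solves F \<sigma>2 D"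
    and eq: "map (tsubst \<sigma>1) ts = map (tsubst \<sigma>2) us"
    and Xs: "distinct Xs" "length Xs = length ts" "length Xs = length us"
    and fresh: "set Xs \<inter> (\<Union>(avars ` C) \<union> \<Union>(tvars ` set ts)) = {}"
      "set Xs \<inter> (\<Union>(avars ` D) \<union> \<Union>(tvars ` set us)) = {}"
  shows "pcond F (set Xs) (C \<union> eqs F Xs ts) (D \<union> eqs F Xs us)"
proof -
  define vs where "vs = map (tsubst \<sigma>1) ts"
  have "solves F (override_on \<sigma>1 (bind Xs vs) (set Xs)) (C \<union> eqs F Xs ts)"
    unfolding vs_def using solves_override_eqs[OF fw sol(1) Xs(1,2) fresh(1)] .
  moreover have "solves F (override_on \<sigma>2 (bind Xs vs) (set Xs)) (D \<union> eqs F Xs us)"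
    unfolding vs_def eq using solves_override_eqs[OF fw sol(2) Xs(1,3) fresh(2)] .
  ultimately show ?thesis
    unfolding pcond_iff_solves by fastforce
qed

definition ground_conflict ::
    "('p,'f,'v,'z) caba_scheme \<Rightarrow> ('p,'f,'v) carg \<Rightarrow> ('p,'f,'v) carg \<Rightarrow> ('p,'f,'v) atom \<Rightarrow> bool" where
  "ground_conflict F \<alpha> \<beta> a \<longleftrightarrow> fst a \<in> apreds F \<and> fst (claim \<alpha>) = contrp F (fst a) \<and>
     (\<exists>\<sigma>1 \<sigma>2. solves F \<sigma>1 (cons \<alpha>) \<and> solves F \<sigma>2 (cons \<beta>) \<and>
        map (tsubst \<sigma>1) (snd (claim \<alpha>)) = map (tsubst \<sigma>2) (snd a))"

lemma pattacks_imp_ground_conflict: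
  assumes fw: "caba_framework F" and "pattacks F \<alpha> \<beta>"
  shows "\<exists>a\<in>asms \<beta>. ground_conflict F \<alpha> \<beta> a"
proof -
  from assms(2) obtain a where a: "a \<in> asms \<beta>" "fst a \<in> apreds F"
    and cases: "claim \<alpha> = contr F a \<and> pcond F (avars (claim \<alpha>)) (cons \<alpha>) (cons \<beta>)
      \<or> fst (claim \<alpha>) = contrp F (fst a) \<and>
        (\<exists>Xs. length Xs = length (snd a) \<and> length Xs = length (snd (claim \<alpha>)) \<and>
          pcond F (set Xs) (cons \<alpha> \<union> eqs F Xs (snd (claim \<alpha>))) (cons \<beta> \<union> eqs F Xs (snd a)))"
    unfolding pattacks_def by blast
  from cases have "ground_conflict F \<alpha> \<beta> a"
  proof (elim disjE conjE exE)
    assume claim: "claim \<alpha> = contr F a" and "pcond F (avars (claim \<alpha>)) (cons \<alpha>) (cons \<beta>)"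
    then obtain \<sigma>1 \<sigma>2 where sol: "solves F \<sigma>1 (cons \<alpha>)" "solves F \<sigma>2 (cons \<beta>)"
      and agree: "\<forall>x\<in>avars (claim \<alpha>). \<sigma>1 x = \<sigma>2 x"
      unfolding pcond_iff_solves by blast
    have "map (tsubst \<sigma>1) (snd (claim \<alpha>)) = map (tsubst \<sigma>2) (snd (claim \<alpha>))"
      using agree by (auto simp: avars_def intro!: tsubst_cong)
    then show ?thesis
      using a sol claim by (auto simp: ground_conflict_def contr_def)
  next
    fix Xs
    assume contr: "fst (claim \<alpha>) = contrp F (fst a)"
      and len: "length Xs = length (snd a)" "length Xs = length (snd (claim \<alpha>))"
      and "pcond F (set Xs) (cons \<alpha> \<union> eqs F Xs (snd (claim \<alpha>))) (cons \<beta> \<union> eqs F Xs (snd a))"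
    then obtain \<sigma>1 \<sigma>2
      where sol1: "solves F \<sigma>1 (cons \<alpha>)" "solves F \<sigma>1 (eqs F Xs (snd (claim \<alpha>)))"
        and sol2: "solves F \<sigma>2 (cons \<beta>)" "solves F \<sigma>2 (eqs F Xs (snd a))"
        and agree: "\<forall>x\<in>set Xs. \<sigma>1 x = \<sigma>2 x"
      unfolding pcond_iff_solves solves_Un by blast
    have "map (tsubst \<sigma>1) (snd (claim \<alpha>)) = map \<sigma>1 Xs"
      using sol1(2) solves_eqs_iff[OF fw len(2)] by simp
    also have "\<dots> = map \<sigma>2 Xs"
      using agree by simp
    also have "\<dots> = map (tsubst \<sigma>2) (snd a)"
      using sol2(2) solves_eqs_iff[OF fw len(1)] by simp
    finally show ?thesis
      using a(2) contr sol1(1) sol2(1) unfolding ground_conflict_def by blast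
  qed
  with a show ?thesis by blast
qed

lemma ground_conflict_imp_pattacks:
  assumes fw: "caba_framework F" and fin: "finite (arg_vars \<alpha> \<union> arg_vars \<beta>)"
    and a: "a \<in> asms \<beta>" and conflict: "ground_conflict F \<alpha> \<beta> a"
  shows "pattacks F \<alpha> \<beta>"
proof -
  obtain \<sigma>1 \<sigma>2 where sol: "solves F \<sigma>1 (cons \<alpha>)" "solves F \<sigma>2 (cons \<beta>)"
    and eq: "map (tsubst \<sigma>1) (snd (claim \<alpha>)) = map (tsubst \<sigma>2) (snd a)"
    using conflict by (auto simp: ground_conflict_def)
  have preds: "fst a \<in> apreds F" "fst (claim \<alpha>) = contrp F (fst a)"
    using conflict by (auto simp: ground_conflict_def)
  show ?thesis
  proof (cases "snd (claim \<alpha>) = snd a")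
    case True
    have "\<forall>x\<in>avars (claim \<alpha>). \<sigma>1 x = \<sigma>2 x"
      using eq True by (auto simp: avars_def intro: tsubst_eq_imp_eq_on_tvars)
    then have "pcond F (avars (claim \<alpha>)) (cons \<alpha>) (cons \<beta>)"
      using sol unfolding pcond_iff_solves by blast
    moreover have "claim \<alpha> = contr F a"
      using True preds by (simp add: contr_def prod_eq_iff)
    ultimately show ?thesis
      using a preds unfolding pattacks_def by blast
  next
    case False
    have len: "length (snd (claim \<alpha>)) = length (snd a)"
      using eq by (metis length_map)
    obtain Xs where Xs: "distinct Xs" "length Xs = length (snd a)"
      and fresh: "set Xs \<inter> (arg_vars \<alpha> \<union> arg_vars \<beta>) = {}"
      using ex_fresh_distinct_list fin fw by (metis caba_framework_def)
    have "\<Union>(avars ` cons \<alpha>) \<union> \<Union>(tvars ` set (snd (claim \<alpha>))) \<subseteq> arg_vars \<alpha>"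
      by (auto simp: arg_vars_def avars_def)
    then have fresh\<alpha>: "set Xs \<inter> (\<Union>(avars ` cons \<alpha>) \<union> \<Union>(tvars ` set (snd (claim \<alpha>)))) = {}"
      using fresh by blast
    have "\<Union>(avars ` cons \<beta>) \<union> \<Union>(tvars ` set (snd a)) \<subseteq> arg_vars \<beta>"
      using a by (auto simp: arg_vars_def avars_def)
    then have fresh\<beta>: "set Xs \<inter> (\<Union>(avars ` cons \<beta>) \<union> \<Union>(tvars ` set (snd a))) = {}"
      using fresh by blast
    have "pcond F (set Xs) (cons \<alpha> \<union> eqs F Xs (snd (claim \<alpha>))) (cons \<beta> \<union> eqs F Xs (snd a))"
      using pcond_fresh_eqs[OF fw sol eq Xs(1) _ _ fresh\<alpha> fresh\<beta>] Xs(2) len by simp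
    then show ?thesis
      using a preds False Xs fresh len unfolding pattacks_def by fastforce
  qed
qed

lemma cinst_simps [simp]:
  "cons (cinst \<alpha> \<theta> D) = asubst \<theta> ` cons \<alpha> \<union> D"
  "asms (cinst \<alpha> \<theta> D) = asubst \<theta> ` asms \<alpha>"
  "claim (cinst \<alpha> \<theta> D) = asubst \<theta> (claim \<alpha>)"
  by (simp_all add: cinst_def)

lemma asubst_simps [simp]:
  "fst (asubst \<theta> a) = fst a"
  "snd (asubst \<theta> a) = map (tsubst \<theta>) (snd a)"
  by (simp_all add: asubst_def)

lemma map_tsubst_tsubst: "map (tsubst \<sigma>) (map (tsubst \<theta>) ts) = map (tsubst (tsubst \<sigma> \<circ> \<theta>)) ts"
  by (simp add: tsubst_tsubst)

lemma
  assumes "\<alpha> \<in> CArg F"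
  shows CArg_cons: "finite (cons \<alpha>)" "cons \<alpha> \<subseteq> catoms F"
    and CArg_finite_arg_vars: "finite (arg_vars \<alpha>)"
proof -
  obtain \<tau> \<theta> D where \<alpha>: "\<alpha> = cinst \<tau> \<theta> D" and "tight F \<tau>"
    and cons: "consistent F (asubst \<theta> ` cons \<tau> \<union> D)"
    using assms unfolding CArg_def by blast
  then obtain T where "asms \<tau> = {l \<in> leaves T. fst l \<in> apreds F}"
    unfolding tight_def by blast
  moreover have "finite (leaves T)"
    by (induction T) auto
  ultimately have "finite (asms \<alpha>)"
    using \<alpha> by simp
  show "finite (cons \<alpha>)" "cons \<alpha> \<subseteq> catoms F"
    using cons \<alpha> by (simp_all add: consistent_def)
  then show "finite (arg_vars \<alpha>)"
    using \<open>finite (asms \<alpha>)\<close> by (simp add: arg_vars_def avars_def finite_tvars)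
qed

lemma GrCInst_arg_vars: "\<alpha>' \<in> GrCInst F \<alpha> \<Longrightarrow> arg_vars \<alpha>' = {}"
  by (auto simp: GrCInst_def ground_arg_def aground_def arg_vars_def)

lemma cinst_in_GrCInst:
  assumes "solves F \<sigma> (cons \<alpha>)" and "finite (cons \<alpha>)" and "cons \<alpha> \<subseteq> catoms F"
  shows "cinst \<alpha> \<sigma> {} \<in> GrCInst F \<alpha>"
proof -
  have "gr_assign \<sigma>" using assms(1) by (simp add: solves_def)
  then have "ground_arg (cinst \<alpha> \<sigma> {})"
    by (simp add: ground_arg_def aground_def avars_def tvars_tsubst_gr_assign)
  moreover have "asubst \<sigma> ` cons \<alpha> \<subseteq> catoms F"
    using assms(3) by (auto simp: catoms_def)
  then have "consistent F (asubst \<sigma> ` cons \<alpha> \<union> {})"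
    using assms(2) solves_image_asubst_self[OF assms(1)] unfolding consistent_iff_solves by auto
  ultimately show ?thesis
    unfolding GrCInst_def by blast
qed

lemma ground_conflict_GrCInst:
  assumes "ground_conflict F \<alpha> \<beta> a"
    and "finite (cons \<alpha>)" "cons \<alpha> \<subseteq> catoms F" "finite (cons \<beta>)" "cons \<beta> \<subseteq> catoms F"
  obtains \<sigma>1 \<sigma>2 where "cinst \<alpha> \<sigma>1 {} \<in> GrCInst F \<alpha>" "cinst \<beta> \<sigma>2 {} \<in> GrCInst F \<beta>"
    "ground_conflict F (cinst \<alpha> \<sigma>1 {}) (cinst \<beta> \<sigma>2 {}) (asubst \<sigma>2 a)"
proof -
  obtain \<sigma>1 \<sigma>2 where sol: "solves F \<sigma>1 (cons \<alpha>)" "solves F \<sigma>2 (cons \<beta>)"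
    and eq: "map (tsubst \<sigma>1) (snd (claim \<alpha>)) = map (tsubst \<sigma>2) (snd a)"
    using assms(1) by (auto simp: ground_conflict_def)
  have "map (tsubst \<sigma>1) (map (tsubst \<sigma>1) (snd (claim \<alpha>))) = map (tsubst \<sigma>2) (map (tsubst \<sigma>2) (snd a))"
    using sol eq by (simp only: map_tsubst_tsubst solves_def tsubst_comp_gr_assign)
  then have "ground_conflict F (cinst \<alpha> \<sigma>1 {}) (cinst \<beta> \<sigma>2 {}) (asubst \<sigma>2 a)"
    using assms(1) solves_image_asubst_self[OF sol(1)] solves_image_asubst_self[OF sol(2)]
    unfolding ground_conflict_def by auto
  then show thesis
    using that cinst_in_GrCInst sol assms(2-5) by blast
qed

lemma ground_conflict_cinst:
  assumes "ground_conflict F (cinst \<alpha> \<theta>1 D1) (cinst \<beta> \<theta>2 D2) (asubst \<theta>2 a)"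
  shows "ground_conflict F \<alpha> \<beta> a"
proof -
  obtain \<sigma>1 \<sigma>2 where "solves F \<sigma>1 (asubst \<theta>1 ` cons \<alpha>)" "solves F \<sigma>2 (asubst \<theta>2 ` cons \<beta>)"
    and "map (tsubst \<sigma>1) (map (tsubst \<theta>1) (snd (claim \<alpha>))) = map (tsubst \<sigma>2) (map (tsubst \<theta>2) (snd a))"
    using assms unfolding ground_conflict_def by (auto simp: solves_Un)
  then have "solves F (tsubst \<sigma>1 \<circ> \<theta>1) (cons \<alpha>)" "solves F (tsubst \<sigma>2 \<circ> \<theta>2) (cons \<beta>)"
    and "map (tsubst (tsubst \<sigma>1 \<circ> \<theta>1)) (snd (claim \<alpha>)) = map (tsubst (tsubst \<sigma>2 \<circ> \<theta>2)) (snd a)"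
    by (simp_all only: solves_image_asubst map_tsubst_tsubst)
  with assms show ?thesis
    unfolding ground_conflict_def by auto
qed

theorem lemmaB2:
  fixes F :: "('p,'f,'v) caba" and \<alpha> \<beta> :: "('p,'f,'v) carg"
  assumes "caba_framework F"
    and "\<alpha> \<in> CArg F" and "\<beta> \<in> CArg F"
  shows "pattacks F \<alpha> \<beta> \<longleftrightarrow>
           (\<exists>\<alpha>'\<in>GrCInst F \<alpha>. \<exists>\<beta>'\<in>GrCInst F \<beta>. pattacks F \<alpha>' \<beta>')"
proof
  assume "pattacks F \<alpha> \<beta>"
  then obtain a where a: "a \<in> asms \<beta>" "ground_conflict F \<alpha> \<beta> a"
    using pattacks_imp_ground_conflict assms(1) by blast
  then obtain \<sigma>1 \<sigma>2 where gr: "cinst \<alpha> \<sigma>1 {} \<in> GrCInst F \<alpha>" "cinst \<beta> \<sigma>2 {} \<in> GrCInst F \<beta>"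
    and conflict: "ground_conflict F (cinst \<alpha> \<sigma>1 {}) (cinst \<beta> \<sigma>2 {}) (asubst \<sigma>2 a)"
    using ground_conflict_GrCInst CArg_cons assms(2,3) by metis
  have "finite (arg_vars (cinst \<alpha> \<sigma>1 {}) \<union> arg_vars (cinst \<beta> \<sigma>2 {}))"
    using GrCInst_arg_vars[OF gr(1)] GrCInst_arg_vars[OF gr(2)] by simp
  moreover have "asubst \<sigma>2 a \<in> asms (cinst \<beta> \<sigma>2 {})"
    using a(1) by simp
  ultimately have "pattacks F (cinst \<alpha> \<sigma>1 {}) (cinst \<beta> \<sigma>2 {})"
    using ground_conflict_imp_pattacks[OF assms(1) _ _ conflict] by blast
  with gr show "\<exists>\<alpha>'\<in>GrCInst F \<alpha>. \<exists>\<beta>'\<in>GrCInst F \<beta>. pattacks F \<alpha>' \<beta>'"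
    by blast
next
  assume "\<exists>\<alpha>'\<in>GrCInst F \<alpha>. \<exists>\<beta>'\<in>GrCInst F \<beta>. pattacks F \<alpha>' \<beta>'"
  then obtain \<theta>1 D1 \<theta>2 D2 where "pattacks F (cinst \<alpha> \<theta>1 D1) (cinst \<beta> \<theta>2 D2)"
    unfolding GrCInst_def by blast
  then obtain a' where "a' \<in> asubst \<theta>2 ` asms \<beta>"
    and "ground_conflict F (cinst \<alpha> \<theta>1 D1) (cinst \<beta> \<theta>2 D2) a'"
    using pattacks_imp_ground_conflict[OF assms(1)] by fastforce
  then obtain a where "a \<in> asms \<beta>" "ground_conflict F (cinst \<alpha> \<theta>1 D1) (cinst \<beta> \<theta>2 D2) (asubst \<theta>2 a)"
    by blast
  then show "pattacks F \<alpha> \<beta>"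
    using ground_conflict_imp_pattacks[OF assms(1)] ground_conflict_cinst
      CArg_finite_arg_vars assms(2,3) by blast
qed

end
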